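(* Let $s\geq 2$ and let $n_1>n_2>\cdots>n_s\geq 2$ be integers. Let $X_{n_1,\ldots,n_s}$ be the set of vectors of length $s+1$ consisting of: the vector $(n_1,n_2,\ldots,n_s,1)$; the set $X_s^s=\{(j,\ldots,j,0),(j,\ldots,j,1): j\in\{1,\ldots,n_s\}\}$, where $j$ is repeated in the first $s$ coordinates; and, for each $i\in\{2,\ldots,s\}$, the set $X_{i-1}^s$ of vectors $(\underbrace{n_i+k,\ldots,n_i+k}_{i-1},\underbrace{1,\ldots,1}_{s-i+1},0)$ and $(\underbrace{n_i+k,\ldots,n_i+k}_{i-1},n_i,n_{i+1},\ldots,n_s,1)$ for $k\in\{0,1,\ldots,n_{i-1}-n_i-1\}$. Let $\mathcal B_{n_1,\ldots,n_s}$ consist of all $3$-element subsets $\{\alpha_1,\alpha_2,\alpha_3\}\subseteq X_{n_1,\ldots,n_s}$ such that for every coordinate $j\in\{1,\ldots,s+1\}$ the set $\{\alpha_{1(j)},\alpha_{2(j)},\alpha_{3(j)}\}$ has exactly $2$ elements, together with the additional triple $\{(1,\ldots,1,1,0),(n_s,\ldots,n_s,1,0),(n_s,\ldots,n_s,n_s,0)\}$ (here the first vector has its first $s$ entries equal to $1$; the second has its first $s-1$ entries equal to $n_s$ and $s$-th entry $1$; the third has its first $s$ entries equal to $n_s$; all three have last entry $0$). Then the $3$-uniform bi-hypergraph $\mathcal H_{n_1,\ldots,n_s}=(X_{n_1,\ldots,n_s},\mathcal B_{n_1,\ldots,n_s})$ is a one-realization of $\{n_1,n_2,\ldots,n_s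\}$.
   Context: A bi-hypergraph $(X,\mathcal B)$ is a mixed hypergraph whose $\mathcal C$-edges and $\mathcal D$-edges both equal $\mathcal B$. A strict $k$-coloring is a partition of $X$ into exactly $k$ nonempty classes such that every edge of $\mathcal B$ contains two vertices of a common class and two vertices of distinct classes. The feasible set is the set of $k$ admitting a strict $k$-coloring; the chromatic spectrum lists, for $k=1,\ldots,\max$ of the feasible set, the number of strict $k$-colorings (as partitions). A one-realization of a set $S$ is a mixed hypergraph whose feasible set is $S$ and whose chromatic spectrum has all entries in $\{0,1\}$. $\alpha_{l(j)}$ denotes the $j$-th entry of $\alpha_l$. *)

theory Defs
  imports Main "HOL-Library.Disjoint_Sets"
begin

definition strict_coloring ::
  "'a set \<Rightarrow> 'a set set \<Rightarrow> 'a set set \<Rightarrow> nat \<Rightarrow> 'a set set \<Rightarrow> bool" where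
  "strict_coloring X CE DE k P \<longleftrightarrow>
     partition_on X P \<and> card P = k \<and>
     (\<forall>E\<in>CE. \<exists>Q\<in>P. \<exists>x\<in>E. \<exists>y\<in>E. x \<noteq> y \<and> x \<in> Q \<and> y \<in> Q) \<and>
     (\<forall>E\<in>DE. \<exists>x\<in>E. \<exists>y\<in>E. \<exists>Q\<in>P. x \<in> Q \<and> y \<notin> Q)"

definition feasible_set :: "'a set \<Rightarrow> 'a set set \<Rightarrow> 'a set set \<Rightarrow> nat set" where
  "feasible_set X CE DE = {k. \<exists>P. strict_coloring X CE DE k P}"

definition num_colorings :: "'a set \<Rightarrow> 'a set set \<Rightarrow> 'a set set \<Rightarrow> nat \<Rightarrow> nat" where
  "num_colorings X CE DE k = card {P. strict_coloring X CE DE k P}"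

definition one_realization :: "'a set \<Rightarrow> 'a set set \<Rightarrow> 'a set set \<Rightarrow> nat set \<Rightarrow> bool" where
  "one_realization X CE DE S \<longleftrightarrow>
     finite X \<and> feasible_set X CE DE = S \<and>
     (\<forall>k \<in> {1..Max (feasible_set X CE DE)}. num_colorings X CE DE k \<in> {0, 1})"

text \<open>A bi-hypergraph (X, B): C-edges = D-edges = B.\<close>
abbreviation bi_one_realization :: "'a set \<Rightarrow> 'a set set \<Rightarrow> nat set \<Rightarrow> bool" where
  "bi_one_realization X B S \<equiv> one_realization X B B S"

text \<open>Vectors of length s+1 are lists of naturals; coordinate j (1-based in the paper)
is list index j-1. The parameters n_1,...,n_s form the list ns, with n_i = ns ! (i-1).\<close>

definition Xvert :: "nat list \<Rightarrow> nat list set" where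
  "Xvert ns = (let s = length ns; n = (\<lambda>i. ns ! (i - 1)) in
     {ns @ [1]}
     \<union> {replicate s j @ [c] | j c. j \<in> {1..n s} \<and> c \<in> {0, 1}}
     \<union> (\<Union>i\<in>{2..s}. \<Union>k\<in>{0..<n (i - 1) - n i}.
          {replicate (i - 1) (n i + k) @ replicate (s - i + 1) 1 @ [0],
           replicate (i - 1) (n i + k) @ drop (i - 1) ns @ [1]}))"

definition Bedges :: "nat list \<Rightarrow> nat list set set" where
  "Bedges ns = (let s = length ns; ns_last = ns ! (s - 1) in
     {A. A \<subseteq> Xvert ns \<and> card A = 3 \<and>
         (\<forall>j < s + 1. card ((\<lambda>a. a ! j) ` A) = 2)}
     \<union> {{replicate s 1 @ [0],
         replicate (s - 1) ns_last @ [1, 0],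
         replicate s ns_last @ [0]}})"

end

theory Submission
  imports Defs
begin

text \<open>For \<open>i \<le> s\<close>, the \<open>i\<close>-th coordinate takes exactly the values \<open>1, \<dots>, n\<^sub>i\<close> on the vertex set
  and exactly two values on every edge, so its fibers form a strict \<open>n\<^sub>i\<close>-coloring. Conversely,
  a strict coloring meets every edge in exactly two classes. Writing \<open>a\<^sub>j = (j, \<dots>, j, 0)\<close> and
  \<open>b\<^sub>j = (j, \<dots>, j, 1)\<close>, eight edges through \<open>a\<^sub>1, b\<^sub>1, a\<^sub>n\<^sub>s, b\<^sub>n\<^sub>s\<close> and the middle vertex of the
  extra triple force \<open>a\<^sub>1 \<sim> b\<^sub>1\<close>, and from there \<open>a\<^sub>j \<sim> b\<^sub>j\<close> for all \<open>j\<close> with the \<open>a\<^sub>j\<close> pairwise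
  separated. For the two vertices \<open>c, d\<close> of a block with the same \<open>k\<close>, either \<open>c \<sim> d\<close>, or
  \<open>c \<sim> a\<^sub>1\<close> and \<open>d \<sim> (n\<^sub>1, \<dots>, n\<^sub>s, 1)\<close>; the second alternative propagates to all earlier blocks,
  so it holds exactly for the blocks before some level \<open>i\<close>. The coloring is then forced to be
  the partition by the \<open>i\<close>-th coordinate, hence it is determined by its number of classes.\<close>

definition class_of :: "'a set set \<Rightarrow> 'a \<Rightarrow> 'a set" where
  "class_of P x = (THE Q. Q \<in> P \<and> x \<in> Q)"

lemma class_of_eq:
  assumes "partition_on X P" "Q \<in> P" "x \<in> Q"
  shows "class_of P x = Q"
  unfolding class_of_def
  using assms partition_onD2[OF assms(1)] by (intro the_equality) (auto simp: disjoint_def)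

lemma class_of_in:
  assumes "partition_on X P" "x \<in> X"
  shows "class_of P x \<in> P" "x \<in> class_of P x"
proof -
  obtain Q where "Q \<in> P" "x \<in> Q" using assms partition_onD1[OF assms(1)] by blast
  then show "class_of P x \<in> P" "x \<in> class_of P x" using class_of_eq[OF assms(1)] by auto
qed

definition fibers :: "'a set \<Rightarrow> ('a \<Rightarrow> 'b) \<Rightarrow> 'a set set" where
  "fibers X f = (\<lambda>y. {x\<in>X. f x = y}) ` f ` X"

lemma partition_on_fibers: "partition_on X (fibers X f)"
  unfolding partition_on_def fibers_def disjoint_def by auto

lemma card_fibers: "card (fibers X f) = card (f ` X)"
  unfolding fibers_def by (rule card_image) (auto simp: inj_on_def)

lemma fiber_in_fibers: "x \<in> X \<Longrightarrow> {z\<in>X. f z = f x} \<in> fibers X f"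
  unfolding fibers_def by simp

lemma partition_eq_fibers:
  assumes P: "partition_on X P"
    and same_class: "\<And>x y. x \<in> X \<Longrightarrow> y \<in> X \<Longrightarrow> class_of P x = class_of P y \<longleftrightarrow> f x = f y"
  shows "P = fibers X f"
proof -
  have class_is_fiber: "class_of P x = {z\<in>X. f z = f x}" if x: "x \<in> X" for x
  proof (intro set_eqI iffI)
    fix z assume z: "z \<in> class_of P x"
    have "z \<in> X" using partition_onD1[OF P] class_of_in(1)[OF P x] z by blast
    moreover have "class_of P z = class_of P x" using class_of_eq[OF P class_of_in(1)[OF P x] z] .
    ultimately show "z \<in> {z\<in>X. f z = f x}" using same_class[OF _ x] by simp
  next
    fix z assume "z \<in> {z\<in>X. f z = f x}"
    then have "z \<in> X" "class_of P z = class_of P x" using same_class[OF _ x] by auto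
    then show "z \<in> class_of P x" using class_of_in(2)[OF P] by metis
  qed
  have "P = class_of P ` X"
  proof
    show "P \<subseteq> class_of P ` X"
    proof
      fix Q assume Q: "Q \<in> P"
      then obtain x where "x \<in> Q" using partition_onD3[OF P] by (metis all_not_in_conv)
      moreover have "x \<in> X" using partition_onD1[OF P] Q \<open>x \<in> Q\<close> by blast
      ultimately show "Q \<in> class_of P ` X" using class_of_eq[OF P Q] by blast
    qed
    show "class_of P ` X \<subseteq> P" using class_of_in(1)[OF P] by blast
  qed
  also have "\<dots> = fibers X f" unfolding fibers_def image_image using class_is_fiber by simp
  finally show ?thesis .
qed

lemma card_three_eq_2_iff:
  "card {x, y, z} = 2 \<longleftrightarrow> (x = y \<or> x = z \<or> y = z) \<and> \<not> (x = y \<and> y = z)"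
  by (auto simp: card_insert_if)

lemma strict_coloring_edge_two_classes:
  assumes col: "strict_coloring X B B k P" and E: "{x, y, z} \<in> B" "{x, y, z} \<subseteq> X"
  shows "card {class_of P x, class_of P y, class_of P z} = 2"
proof -
  have P: "partition_on X P" using col by (simp add: strict_coloring_def)
  obtain Q u w where uw: "Q \<in> P" "u \<in> {x, y, z}" "w \<in> {x, y, z}" "u \<noteq> w" "u \<in> Q" "w \<in> Q"
    using col E(1) unfolding strict_coloring_def by blast
  have same: "class_of P u = class_of P w"
    using class_of_eq[OF P uw(1)] uw(5,6) by simp
  obtain Q' u' w' where uw': "u' \<in> {x, y, z}" "w' \<in> {x, y, z}" "Q' \<in> P" "u' \<in> Q'" "w' \<notin> Q'"
    using col E(1) unfolding strict_coloring_def by blast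
  have "w' \<in> X" using uw'(2) E(2) by blast
  then have differ: "class_of P u' \<noteq> class_of P w'"
    using class_of_eq[OF P uw'(3,4)] class_of_in(2)[OF P] uw'(5) by metis
  have "class_of P x = class_of P y \<or> class_of P x = class_of P z \<or> class_of P y = class_of P z"
    using uw(2-4) same by auto
  moreover have "\<not> (class_of P x = class_of P y \<and> class_of P y = class_of P z)"
    using uw'(1,2) differ by auto
  ultimately show ?thesis unfolding card_three_eq_2_iff by blast
qed

lemma fibers_strict_coloring:
  assumes edges: "\<And>E. E \<in> B \<Longrightarrow> E \<subseteq> X \<and> card E = 3 \<and> card (f ` E) = 2"
  shows "strict_coloring X B B (card (f ` X)) (fibers X f)"
  unfolding strict_coloring_def
proof (intro conjI ballI partition_on_fibers card_fibers)
  fix E assume "E \<in> B"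
  then have E: "E \<subseteq> X" "card E = 3" "card (f ` E) = 2" using edges by auto
  have "\<not> inj_on f E"
  proof
    assume "inj_on f E"
    then have "card (f ` E) = card E" by (rule card_image)
    with E(2,3) show False by simp
  qed
  then obtain x y where xy: "x \<in> E" "y \<in> E" "x \<noteq> y" "f x = f y" unfolding inj_on_def by blast
  define Q where "Q = {z\<in>X. f z = f x}"
  have "Q \<in> fibers X f" unfolding Q_def using xy(1) E(1) by (intro fiber_in_fibers) auto
  moreover have "x \<in> Q" "y \<in> Q" using xy E(1) unfolding Q_def by auto
  ultimately show "\<exists>Q\<in>fibers X f. \<exists>x\<in>E. \<exists>y\<in>E. x \<noteq> y \<and> x \<in> Q \<and> y \<in> Q"
    using xy(1-3) by blast
  obtain a b where "f ` E = {a, b}" "a \<noteq> b" using E(3) card_2_iff by metis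
  then obtain x' y' where x'y': "x' \<in> E" "y' \<in> E" "f x' \<noteq> f y'" by (metis imageE insertCI)
  define Q' where "Q' = {z\<in>X. f z = f x'}"
  have "Q' \<in> fibers X f" unfolding Q'_def using x'y'(1) E(1) by (intro fiber_in_fibers) auto
  moreover have "x' \<in> Q'" "y' \<notin> Q'" using x'y' E(1) unfolding Q'_def by auto
  ultimately show "\<exists>x\<in>E. \<exists>y\<in>E. \<exists>Q\<in>fibers X f. x \<in> Q \<and> y \<notin> Q"
    using x'y'(1,2) by blast
qed

section \<open>The vertices and edges of the construction\<close>

locale construction =
  fixes ns :: "nat list"
  assumes length_ge_2: "length ns \<ge> 2"
    and decreasing: "sorted_wrt (>) ns"
    and last_ge_2: "ns ! (length ns - 1) \<ge> 2"
begin

abbreviation "s \<equiv> length ns"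
abbreviation "N \<equiv> ns ! (length ns - 1)"

lemma s_pos: "0 < s"
  using length_ge_2 by linarith

lemma ns_less: "i < j \<Longrightarrow> j < s \<Longrightarrow> ns ! j < ns ! i"
  using decreasing by (simp add: sorted_wrt_iff_nth_less)

lemma ns_le: "i \<le> j \<Longrightarrow> j < s \<Longrightarrow> ns ! j \<le> ns ! i"
  using ns_less by (cases "i = j") (auto simp: less_imp_le)

lemma last_le_ns: "i < s \<Longrightarrow> N \<le> ns ! i"
  using ns_le[of i "s - 1"] by simp

lemma last_less_ns: "i < s - 1 \<Longrightarrow> N < ns ! i"
  using ns_less[of i "s - 1"] s_pos by simp

lemma ns_inj: "i < s \<Longrightarrow> j < s \<Longrightarrow> ns ! i = ns ! j \<Longrightarrow> i = j"
  using ns_less by (metis less_irrefl nat_neq_iff)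

definition vA :: "nat \<Rightarrow> nat list" where "vA j = replicate s j @ [0]"
definition vB :: "nat \<Rightarrow> nat list" where "vB j = replicate s j @ [1]"
definition vC :: "nat \<Rightarrow> nat \<Rightarrow> nat list" where "vC p m = replicate p m @ replicate (s - p) 1 @ [0]"
definition vD :: "nat \<Rightarrow> nat \<Rightarrow> nat list" where "vD p m = replicate p m @ drop p ns @ [1]"
definition vT :: "nat list" where "vT = ns @ [1]"

text \<open>With 0-based coordinates \<open>ns ! p\<close> is the paper's \<open>n\<^sub>p\<^sub>+\<^sub>1\<close>, so \<open>vC p m\<close> and \<open>vD p m\<close> are
  the two vertices of the block \<open>X\<^sub>p\<^sup>s\<close> with \<open>k = m - n\<^sub>p\<^sub>+\<^sub>1\<close>; they exist exactly for admissible
  \<open>(p, m)\<close>.\<close>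

definition admissible :: "nat \<Rightarrow> nat \<Rightarrow> bool" where
  "admissible p m \<longleftrightarrow> 1 \<le> p \<and> p < s \<and> ns ! p \<le> m \<and> m < ns ! (p - 1)"

lemma admissibleD:
  assumes "admissible p m"
  shows "1 \<le> p" "p < s" "ns ! p \<le> m" "m < ns ! (p - 1)" "N \<le> m" "p \<le> s"
  using assms last_le_ns[of p] by (auto simp: admissible_def)

lemma admissible_least: "1 \<le> p \<Longrightarrow> p < s \<Longrightarrow> admissible p (ns ! p)"
  unfolding admissible_def using ns_less[of "p - 1" p] by auto

lemma admissible_corner: "admissible (s - 1) N"
  using admissible_least[of "s - 1"] length_ge_2 by simp

lemma admissible_level_unique: "admissible p m \<Longrightarrow> admissible q m \<Longrightarrow> p = q"
proof (rule ccontr)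
  assume adm: "admissible p m" "admissible q m" and "p \<noteq> q"
  have False if "admissible p' m" "admissible q' m" "p' < q'" for p' q'
  proof -
    have "ns ! (q' - 1) \<le> ns ! p'"
      using that admissibleD[OF that(1)] admissibleD[OF that(2)] by (intro ns_le) auto
    then show False using admissibleD[OF that(1)] admissibleD[OF that(2)] by auto
  qed
  then show False using adm \<open>p \<noteq> q\<close> by (metis nat_neq_iff)
qed

lemma vA_nth: "l < s \<Longrightarrow> vA j ! l = j" "vA j ! s = 0" "length (vA j) = s + 1"
  by (auto simp: vA_def nth_append)

lemma vB_nth: "l < s \<Longrightarrow> vB j ! l = j" "vB j ! s = 1" "length (vB j) = s + 1"
  by (auto simp: vB_def nth_append)

lemma vC_nth:
  "p \<le> s \<Longrightarrow> l < s \<Longrightarrow> vC p m ! l = (if l < p then m else 1)"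
  "p \<le> s \<Longrightarrow> vC p m ! s = 0" "p \<le> s \<Longrightarrow> length (vC p m) = s + 1"
  by (auto simp: vC_def nth_append)

lemma vD_nth:
  "p \<le> s \<Longrightarrow> l < s \<Longrightarrow> vD p m ! l = (if l < p then m else ns ! l)"
  "p \<le> s \<Longrightarrow> vD p m ! s = 1" "p \<le> s \<Longrightarrow> length (vD p m) = s + 1"
  by (auto simp: vD_def nth_append)

lemma vT_nth: "l < s \<Longrightarrow> vT ! l = ns ! l" "vT ! s = 1" "length vT = s + 1"
  by (auto simp: vT_def nth_append)

lemma vD_corner_eq_vB: "vD (s - 1) N = vB N"
  using length_ge_2
  by (intro nth_equalityI) (auto simp: vD_nth vB_nth less_Suc_eq intro!: arg_cong[of _ _ "(!) ns"])

lemma vA_in_X: "1 \<le> j \<Longrightarrow> j \<le> N \<Longrightarrow> vA j \<in> Xvert ns"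
  unfolding Xvert_def Let_def vA_def by (rule UnI1, rule UnI2, simp) blast

lemma vB_in_X: "1 \<le> j \<Longrightarrow> j \<le> N \<Longrightarrow> vB j \<in> Xvert ns"
  unfolding Xvert_def Let_def vB_def by (rule UnI1, rule UnI2, simp) blast

lemma vT_in_X: "vT \<in> Xvert ns"
  unfolding Xvert_def Let_def vT_def by simp

lemma block_in_X:
  assumes "admissible p m"
  shows "vC p m \<in> Xvert ns" "vD p m \<in> Xvert ns"
proof -
  have adm: "1 \<le> p" "p < s" "ns ! p \<le> m" "m < ns ! (p - 1)"
    using assms by (auto simp: admissible_def)
  have "Suc p \<in> {2..s}" "m - ns ! p \<in> {0..<ns ! (Suc p - 1 - 1) - ns ! (Suc p - 1)}"
    using adm by auto
  moreover have "vC p m = replicate (Suc p - 1) (ns ! (Suc p - 1) + (m - ns ! p))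
                   @ replicate (s - Suc p + 1) 1 @ [0]"
    "vD p m = replicate (Suc p - 1) (ns ! (Suc p - 1) + (m - ns ! p)) @ drop (Suc p - 1) ns @ [1]"
    using adm by (simp_all add: vC_def vD_def Suc_diff_Suc)
  ultimately show "vC p m \<in> Xvert ns" "vD p m \<in> Xvert ns"
    unfolding Xvert_def Let_def by blast+
qed

lemma Xvert_cases:
  assumes "z \<in> Xvert ns"
  obtains "z = vT"
    | j where "1 \<le> j" "j \<le> N" "z = vA j"
    | j where "1 \<le> j" "j \<le> N" "z = vB j"
    | p m where "admissible p m" "z = vC p m"
    | p m where "admissible p m" "z = vD p m"
proof -
  consider "z = vT" | j c where "j \<in> {1..N}" "c \<in> {0, 1::nat}" "z = replicate s j @ [c]"
    | i k where "i \<in> {2..s}" "k \<in> {0..<ns ! (i - 1 - 1) - ns ! (i - 1)}"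
        "z = replicate (i - 1) (ns ! (i - 1) + k) @ replicate (s - i + 1) 1 @ [0] \<or>
         z = replicate (i - 1) (ns ! (i - 1) + k) @ drop (i - 1) ns @ [1]"
    using assms unfolding Xvert_def Let_def vT_def by (elim UnE) auto
  then show ?thesis
  proof cases
    case (2 j c)
    then show ?thesis using that unfolding vA_def vB_def by auto
  next
    case (3 i k)
    have "admissible (i - 1) (ns ! (i - 1) + k)" using 3 unfolding admissible_def by auto
    moreover have "s - i + 1 = s - (i - 1)" using 3 by auto
    ultimately show ?thesis using 3 that unfolding vC_def vD_def by metis
  qed (use that in blast)
qed

lemma last_coord_01: "z \<in> Xvert ns \<Longrightarrow> z ! s \<in> {0, 1}"
  by (erule Xvert_cases) (auto simp: vA_nth vB_nth vC_nth vD_nth vT_nth admissible_def)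

lemma triple_in_Bedges:
  assumes "x \<in> Xvert ns" "y \<in> Xvert ns" "z \<in> Xvert ns" "x \<noteq> y" "x \<noteq> z" "y \<noteq> z"
    and "\<And>l. l < s \<Longrightarrow> card {x ! l, y ! l, z ! l} = 2" and "card {x ! s, y ! s, z ! s} = 2"
  shows "{x, y, z} \<in> Bedges ns"
proof -
  have "card ((\<lambda>a. a ! j) ` {x, y, z}) = 2" if "j < s + 1" for j
    using that assms(7)[of j] assms(8) by (cases "j < s") (auto simp: less_Suc_eq)
  moreover have "card {x, y, z} = 3" using assms(4-6) by (simp add: card_insert_if)
  ultimately show ?thesis using assms(1-3) unfolding Bedges_def Let_def by (intro UnI1) simp
qed

lemma diagonal_pair_edge:
  assumes "1 \<le> j" "j \<le> N" "z \<in> Xvert ns" "\<And>l. l < s \<Longrightarrow> z ! l \<noteq> j"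
  shows "{vA j, vB j, z} \<in> Bedges ns"
proof (rule triple_in_Bedges)
  show "vA j \<noteq> vB j" by (metis vA_nth(2) vB_nth(2) zero_neq_one)
  show "vA j \<noteq> z" "vB j \<noteq> z" using vA_nth(1) vB_nth(1) assms(4) s_pos by metis+
  show "card {vA j ! l, vB j ! l, z ! l} = 2" if "l < s" for l
    using that assms(4)[OF that] by (simp add: vA_nth vB_nth card_three_eq_2_iff)
  show "card {vA j ! s, vB j ! s, z ! s} = 2"
    using last_coord_01[OF assms(3)] by (auto simp: vA_nth vB_nth card_three_eq_2_iff)
qed (use assms vA_in_X vB_in_X in auto)

lemma diagonal_cross_edge:
  assumes "1 \<le> j" "j \<le> N" "1 \<le> k" "k \<le> N" "j \<noteq> k" "z \<in> Xvert ns"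
    "\<And>l. l < s \<Longrightarrow> z ! l \<in> {j, k}" "z \<noteq> vA j" "z \<noteq> vB k"
  shows "{vA j, vB k, z} \<in> Bedges ns"
proof (rule triple_in_Bedges)
  show "vA j \<noteq> vB k" by (metis vA_nth(2) vB_nth(2) zero_neq_one)
  show "card {vA j ! l, vB k ! l, z ! l} = 2" if "l < s" for l
    using that assms(5) assms(7)[OF that] by (auto simp: vA_nth vB_nth card_three_eq_2_iff)
  show "card {vA j ! s, vB k ! s, z ! s} = 2"
    using last_coord_01[OF assms(6)] by (auto simp: vA_nth vB_nth card_three_eq_2_iff)
qed (use assms vA_in_X vB_in_X in auto)

lemma vB_pair_edge:
  assumes "1 \<le> j" "j \<le> N" "1 \<le> k" "k \<le> N" "j \<noteq> k" "z \<in> Xvert ns" "z ! s = 0"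
    "\<And>l. l < s \<Longrightarrow> z ! l \<in> {j, k}"
  shows "{vB j, vB k, z} \<in> Bedges ns"
proof (rule triple_in_Bedges)
  show "vB j \<noteq> vB k" using vB_nth(1)[OF s_pos] assms(5) by metis
  show "vB j \<noteq> z" "vB k \<noteq> z" by (metis vB_nth(2) assms(7) zero_neq_one)+
  show "card {vB j ! l, vB k ! l, z ! l} = 2" if "l < s" for l
    using that assms(5) assms(8)[OF that] by (auto simp: vB_nth card_three_eq_2_iff)
  show "card {vB j ! s, vB k ! s, z ! s} = 2"
    using assms(7) by (simp add: vB_nth card_three_eq_2_iff)
qed (use assms vB_in_X in auto)

lemma block_pair_edge:
  assumes adm: "admissible p m" and "z \<in> Xvert ns" "\<And>l. l < p \<Longrightarrow> z ! l \<noteq> m"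
    "\<And>l. p \<le> l \<Longrightarrow> l < s \<Longrightarrow> z ! l \<in> {1, ns ! l}"
  shows "{vC p m, vD p m, z} \<in> Bedges ns"
proof (rule triple_in_Bedges)
  note p = admissibleD[OF adm]
  have z0: "z ! 0 \<noteq> m" using assms(3) p by auto
  show "vC p m \<noteq> vD p m" by (metis vC_nth(2)[OF p(6)] vD_nth(2)[OF p(6)] zero_neq_one)
  show "vC p m \<noteq> z" using vC_nth(1)[OF p(6) s_pos] z0 p by auto
  show "vD p m \<noteq> z" using vD_nth(1)[OF p(6) s_pos] z0 p by auto
  show "card {vC p m ! l, vD p m ! l, z ! l} = 2" if "l < s" for l
  proof (cases "l < p")
    case True
    then show ?thesis using that assms(3)[OF True] p by (simp add: vC_nth vD_nth card_three_eq_2_iff)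
  next
    case False
    have "2 \<le> ns ! l" using last_le_ns[OF that] last_ge_2 by linarith
    then show ?thesis
      using False that assms(4)[of l] p by (auto simp: vC_nth vD_nth card_three_eq_2_iff)
  qed
  show "card {vC p m ! s, vD p m ! s, z ! s} = 2"
    using last_coord_01[OF assms(2)] p by (auto simp: vC_nth vD_nth card_three_eq_2_iff)
qed (use assms block_in_X in auto)

lemma extra_edge_eq:
  "{replicate s 1 @ [0], replicate (s - 1) N @ [1, 0], replicate s N @ [0]} = {vA 1, vC (s - 1) N, vA N}"
proof -
  have "vC (s - 1) N = replicate (s - 1) N @ [1, 0]"
    using length_ge_2 by (simp add: vC_def)
  then show ?thesis by (simp add: vA_def)
qed

lemma Bedges_cases:
  assumes "E \<in> Bedges ns"
  obtains "E \<subseteq> Xvert ns" "card E = 3" "\<And>j. j < s + 1 \<Longrightarrow> card ((\<lambda>a. a ! j) ` E) = 2"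
    | "E = {vA 1, vC (s - 1) N, vA N}"
  using assms unfolding Bedges_def Let_def extra_edge_eq by blast

lemma extra_edge: "{vA 1, vC (s - 1) N, vA N} \<in> Bedges ns"
  unfolding Bedges_def Let_def extra_edge_eq by simp

lemma corner_edges:
  "{vA 1, vB 1, vA N} \<in> Bedges ns" "{vA 1, vB 1, vB N} \<in> Bedges ns"
  "{vA N, vB N, vA 1} \<in> Bedges ns" "{vA N, vB N, vB 1} \<in> Bedges ns"
  "{vA 1, vC (s - 1) N, vA N} \<in> Bedges ns" "{vB 1, vB N, vC (s - 1) N} \<in> Bedges ns"
  "{vA 1, vB N, vC (s - 1) N} \<in> Bedges ns" "{vA N, vB 1, vC (s - 1) N} \<in> Bedges ns"
proof -
  define c0 where "c0 = vC (s - 1) N"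
  have N: "1 \<le> N" "N \<noteq> 1" using last_ge_2 by auto
  have s1: "0 < s - 1" "s - 1 < s" using length_ge_2 by linarith+
  have c0_in_X: "c0 \<in> Xvert ns" unfolding c0_def using block_in_X(1)[OF admissible_corner] .
  have c0_nth: "\<And>l. l < s - 1 \<Longrightarrow> c0 ! l = N" "c0 ! (s - 1) = 1" "c0 ! s = 0"
    using length_ge_2 by (auto simp: c0_def vC_nth)
  have c0_values: "c0 ! l \<in> {1, N}" if "l < s" for l
  proof (cases "l < s - 1")
    case False
    then have "l = s - 1" using that by linarith
    then show ?thesis using c0_nth(2) by simp
  qed (use c0_nth(1) in simp)
  have c0_ne: "c0 \<noteq> vA 1" "c0 \<noteq> vA N" "c0 \<noteq> vB 1" "c0 \<noteq> vB N"
    using c0_nth(1)[OF s1(1)] c0_nth(2,3) vA_nth(1)[OF s_pos] vA_nth(1)[OF s1(2)] vB_nth(2) N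
    by (metis zero_neq_one)+
  show "{vA 1, vB 1, vA N} \<in> Bedges ns" "{vA 1, vB 1, vB N} \<in> Bedges ns"
    "{vA N, vB N, vA 1} \<in> Bedges ns" "{vA N, vB N, vB 1} \<in> Bedges ns"
    using N vA_in_X vB_in_X by (auto intro!: diagonal_pair_edge simp: vA_nth vB_nth)
  show "{vA 1, vC (s - 1) N, vA N} \<in> Bedges ns" by (rule extra_edge)
  show "{vB 1, vB N, vC (s - 1) N} \<in> Bedges ns"
    unfolding c0_def[symmetric] by (rule vB_pair_edge) (use N c0_in_X c0_nth c0_values in auto)
  show "{vA 1, vB N, vC (s - 1) N} \<in> Bedges ns" "{vA N, vB 1, vC (s - 1) N} \<in> Bedges ns"
    unfolding c0_def[symmetric] by (rule diagonal_cross_edge; use N c0_in_X c0_values c0_ne in auto)+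
qed

end

section \<open>Coordinate partitions are strict colorings\<close>

context construction
begin

lemma finite_Xvert: "finite (Xvert ns)"
proof -
  have "{replicate s j @ [c] | j c. j \<in> {1..N} \<and> c \<in> {0, 1::nat}}
        = (\<lambda>(j, c). replicate s j @ [c]) ` ({1..N} \<times> {0, 1})"
    by auto
  then show ?thesis unfolding Xvert_def Let_def by simp
qed

lemma coordinate_in_range:
  assumes "z \<in> Xvert ns" "t < s"
  shows "z ! t \<in> {1..ns ! t}"
  using assms(1)
proof (cases rule: Xvert_cases)
  case (4 p m)
  note p = admissibleD[OF 4(1)]
  have "t < p \<Longrightarrow> ns ! (p - 1) \<le> ns ! t" using p assms(2) by (intro ns_le) auto
  then show ?thesis using 4 p assms(2) last_ge_2 last_le_ns[OF assms(2)] by (auto simp: vC_nth)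
next
  case (5 p m)
  note p = admissibleD[OF 5(1)]
  have "t < p \<Longrightarrow> ns ! (p - 1) \<le> ns ! t" using p assms(2) by (intro ns_le) auto
  then show ?thesis using 5 p assms(2) last_ge_2 last_le_ns[OF assms(2)] by (auto simp: vD_nth)
qed (use assms last_ge_2 last_le_ns[OF assms(2)] in \<open>auto simp: vA_nth vB_nth vT_nth\<close>)

lemma admissible_above:
  assumes "t < s" "N < v" "v < ns ! t"
  obtains p where "t < p" "admissible p v"
proof -
  define p where "p = (LEAST p. ns ! p \<le> v)"
  have "ns ! p \<le> v" "p \<le> s - 1"
    unfolding p_def using assms(2) by (auto intro: LeastI[of _ "s - 1"] Least_le)
  moreover have "t < p"
    using ns_le[of p t] assms \<open>ns ! p \<le> v\<close> by (metis leD le_trans not_le)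
  moreover have "\<not> ns ! (p - 1) \<le> v"
    unfolding p_def by (rule not_less_Least) (use \<open>t < p\<close> p_def in simp)
  ultimately show ?thesis using that s_pos unfolding admissible_def by auto
qed

lemma coordinate_values:
  assumes t: "t < s"
  shows "(\<lambda>x. x ! t) ` Xvert ns = {1..ns ! t}"
proof
  show "(\<lambda>x. x ! t) ` Xvert ns \<subseteq> {1..ns ! t}" using coordinate_in_range[OF _ t] by blast
  show "{1..ns ! t} \<subseteq> (\<lambda>x. x ! t) ` Xvert ns"
  proof
    fix v assume v: "v \<in> {1..ns ! t}"
    consider "v \<le> N" | "v = ns ! t" | "N < v" "v < ns ! t" using v by force
    then show "v \<in> (\<lambda>x. x ! t) ` Xvert ns"
    proof cases
      case 1
      then show ?thesis using vA_in_X[of v] vA_nth(1)[OF t] v by (metis atLeastAtMost_iff image_eqI)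
    next
      case 2
      then show ?thesis using vT_in_X vT_nth(1)[OF t] by (metis image_eqI)
    next
      case 3
      then obtain p where "t < p" "admissible p v" using admissible_above t by blast
      then show ?thesis
        using block_in_X(1) vC_nth(1)[OF _ t] admissibleD by (metis image_eqI)
    qed
  qed
qed

lemma Bedges_coordinate_two_values:
  assumes "E \<in> Bedges ns" "t < s"
  shows "E \<subseteq> Xvert ns \<and> card E = 3 \<and> card ((\<lambda>x. x ! t) ` E) = 2"
proof -
  from assms(1) show ?thesis
  proof (cases rule: Bedges_cases)
    case 2
    have "0 < s - 1" using length_ge_2 by linarith
    then have "vA 1 ! 0 \<noteq> vC (s - 1) N ! 0" "vC (s - 1) N ! (s - 1) \<noteq> vA N ! (s - 1)"
      "vA 1 ! 0 \<noteq> vA N ! 0"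
      using last_ge_2 s_pos by (simp_all add: vA_nth vC_nth)
    then have "card E = 3" using 2 by (auto simp: card_insert_if)
    moreover have "card ((\<lambda>x. x ! t) ` E) = 2"
      using 2 assms(2) last_ge_2 by (simp add: vA_nth vC_nth card_three_eq_2_iff)
    moreover have "E \<subseteq> Xvert ns"
      using 2 vA_in_X block_in_X(1)[OF admissible_corner] last_ge_2 by auto
    ultimately show ?thesis by simp
  qed (use assms(2) in auto)
qed

lemma coordinate_strict_coloring:
  assumes "t < s"
  shows "strict_coloring (Xvert ns) (Bedges ns) (Bedges ns) (ns ! t) (fibers (Xvert ns) (\<lambda>x. x ! t))"
  using fibers_strict_coloring[of "Bedges ns" "Xvert ns" "\<lambda>x. x ! t"]
    Bedges_coordinate_two_values[OF _ assms] coordinate_values[OF assms] by simp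

end

section \<open>Every strict coloring is a coordinate partition\<close>

locale construction_coloring = construction +
  fixes P :: "nat list set set" and k :: nat
  assumes strict: "strict_coloring (Xvert ns) (Bedges ns) (Bedges ns) k P"
begin

lemma partition: "partition_on (Xvert ns) P"
  using strict by (simp add: strict_coloring_def)

abbreviation col :: "nat list \<Rightarrow> nat list set" where
  "col \<equiv> class_of P"

lemma edge_classes:
  assumes "{x, y, z} \<in> Bedges ns" "x \<in> Xvert ns" "y \<in> Xvert ns" "z \<in> Xvert ns"
  shows "(col x = col y \<or> col x = col z \<or> col y = col z) \<and> \<not> (col x = col y \<and> col y = col z)"
  using strict_coloring_edge_two_classes[OF strict assms(1)] assms(2-4)
  unfolding card_three_eq_2_iff by simp

lemma corner_classes: "col (vA 1) = col (vB 1)" "col (vA N) = col (vB N)" "col (vA 1) \<noteq> col (vA N)"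
proof -
  have in_X: "vA 1 \<in> Xvert ns" "vB 1 \<in> Xvert ns" "vA N \<in> Xvert ns" "vB N \<in> Xvert ns"
    "vC (s - 1) N \<in> Xvert ns"
    using vA_in_X vB_in_X block_in_X(1)[OF admissible_corner] last_ge_2 by auto
  note classes = edge_classes[OF corner_edges(1) in_X(1-3)] edge_classes[OF corner_edges(2) in_X(1,2,4)]
    edge_classes[OF corner_edges(3) in_X(3,4,1)] edge_classes[OF corner_edges(4) in_X(3,4,2)]
    edge_classes[OF corner_edges(5) in_X(1,5,3)] edge_classes[OF corner_edges(6) in_X(2,4,5)]
    edge_classes[OF corner_edges(7) in_X(1,4,5)] edge_classes[OF corner_edges(8) in_X(3,2,5)]
  text \<open>If \<open>vA 1\<close> and \<open>vB 1\<close> were separated, the first four edges would split \<open>vA N\<close>, \<open>vB N\<close>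
    between their two classes, and the last four would leave no class for \<open>vC (s - 1) N\<close>.\<close>
  show "col (vA 1) = col (vB 1)"
    using classes by metis
  then show "col (vA N) = col (vB N)" "col (vA 1) \<noteq> col (vA N)"
    using classes(1-3) by auto
qed

lemma vA_vB_same_class:
  assumes "1 \<le> j" "j \<le> N"
  shows "col (vA j) = col (vB j)"
proof -
  consider "j = 1" | "j = N" | "1 < j" "j < N" using assms by linarith
  then show ?thesis
  proof cases
    case 3
    have in_X: "vA 1 \<in> Xvert ns" "vB 1 \<in> Xvert ns" "vA j \<in> Xvert ns" "vB j \<in> Xvert ns"
      using vA_in_X vB_in_X assms last_ge_2 by auto
    have "{vA 1, vB 1, vA j} \<in> Bedges ns" "{vA 1, vB 1, vB j} \<in> Bedges ns"
      "{vA j, vB j, vA 1} \<in> Bedges ns"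
      using 3 in_X by (auto intro!: diagonal_pair_edge simp: vA_nth vB_nth)
    then show ?thesis
      using edge_classes[OF _ in_X(1-3)] edge_classes[OF _ in_X(1,2,4)]
        edge_classes[OF _ in_X(3,4,1)] corner_classes(1) by metis
  qed (use corner_classes in auto)
qed

lemma class_ne_vA:
  assumes "1 \<le> j" "j \<le> N" "z \<in> Xvert ns" "\<And>l. l < s \<Longrightarrow> z ! l \<noteq> j"
  shows "col z \<noteq> col (vA j)"
  using edge_classes[OF diagonal_pair_edge[OF assms] vA_in_X[OF assms(1,2)] vB_in_X[OF assms(1,2)] assms(3)]
    vA_vB_same_class[OF assms(1,2)] by auto

lemma vA_classes_distinct:
  assumes "1 \<le> i" "i \<le> N" "1 \<le> j" "j \<le> N" "i \<noteq> j"
  shows "col (vA i) \<noteq> col (vA j)"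
  using class_ne_vA[OF assms(3,4) vA_in_X[OF assms(1,2)]] assms(5) vA_nth by auto

lemma vD_class_ne_vA1:
  assumes "admissible p m"
  shows "col (vD p m) \<noteq> col (vA 1)"
proof (rule class_ne_vA)
  show "vD p m ! l \<noteq> 1" if "l < s" for l
    using last_ge_2 admissibleD[OF assms] last_le_ns[OF that] that by (auto simp: vD_nth)
qed (use last_ge_2 block_in_X[OF assms] in auto)

lemma vT_class_ne_vA: "1 \<le> j \<Longrightarrow> j < N \<Longrightarrow> col vT \<noteq> col (vA j)"
  using vT_in_X last_le_ns by (intro class_ne_vA) (auto simp: vT_nth dest: leD)

lemma vC_class_ne_vA:
  assumes "admissible p m" "N < m" "2 \<le> j" "j \<le> N"
  shows "col (vC p m) \<noteq> col (vA j)"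
  using assms block_in_X(1)[OF assms(1)] admissibleD[OF assms(1)]
  by (intro class_ne_vA) (auto simp: vC_nth)

lemma vT_class_ne_vA1: "col vT \<noteq> col (vA 1)"
  using vT_class_ne_vA[of 1] last_ge_2 by simp

definition joins_vA1 :: "nat \<Rightarrow> nat \<Rightarrow> bool" where
  "joins_vA1 p m \<longleftrightarrow> col (vC p m) = col (vA 1)"

lemma block_dichotomy:
  assumes adm: "admissible p m"
  shows "(col (vC p m) = col (vD p m) \<and> col vT \<noteq> col (vD p m)) \<or>
         (joins_vA1 p m \<and> col (vD p m) = col vT)"
proof -
  note p = admissibleD[OF adm]
  have A1: "vA 1 \<in> Xvert ns" using vA_in_X last_ge_2 by auto
  have e1: "{vC p m, vD p m, vA 1} \<in> Bedges ns"
    by (rule block_pair_edge[OF adm]) (use A1 p last_ge_2 in \<open>auto simp: vA_nth\<close>)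
  have e2: "{vC p m, vD p m, vT} \<in> Bedges ns"
  proof (rule block_pair_edge[OF adm])
    show "vT ! l \<noteq> m" if "l < p" for l
    proof -
      have "ns ! (p - 1) \<le> ns ! l" using that p by (intro ns_le) auto
      then show ?thesis using p that by (auto simp: vT_nth)
    qed
  qed (use vT_in_X p in \<open>auto simp: vT_nth\<close>)
  show ?thesis
    using edge_classes[OF e1 block_in_X[OF adm] A1] edge_classes[OF e2 block_in_X[OF adm] vT_in_X]
      vD_class_ne_vA1[OF adm] vT_class_ne_vA1 unfolding joins_vA1_def by metis
qed

lemma joins_vA1_vD_class: "admissible p m \<Longrightarrow> joins_vA1 p m \<Longrightarrow> col (vD p m) = col vT"
  using block_dichotomy vD_class_ne_vA1 unfolding joins_vA1_def by metis

lemma not_joins_vA1_classes: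
  "admissible p m \<Longrightarrow> \<not> joins_vA1 p m \<Longrightarrow> col (vC p m) = col (vD p m) \<and> col vT \<noteq> col (vD p m)"
  using block_dichotomy by metis

lemma block_vertex_avoids_value:
  assumes "admissible p m" "admissible q m'" "q \<le> p" "(q, m') \<noteq> (p, m)" "l < p"
  shows "vC q m' ! l \<noteq> m" "vD q m' ! l \<noteq> m"
proof -
  note p = admissibleD[OF assms(1)] and q = admissibleD[OF assms(2)]
  have "m' \<noteq> m" if "l < q"
  proof (cases "q = p")
    case False
    then have "ns ! (p - 1) \<le> ns ! q" using assms(3) p by (intro ns_le) auto
    then show ?thesis using p q by auto
  qed (use assms(4) in simp)
  moreover have "ns ! (p - 1) \<le> ns ! l" using assms(5) p by (intro ns_le) auto
  ultimately show "vC q m' ! l \<noteq> m" "vD q m' ! l \<noteq> m"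
    using assms(5) p q last_ge_2 by (auto simp: vC_nth vD_nth)
qed

lemma joins_vA1_downward:
  assumes adm: "admissible p m" "admissible q m'" and "q \<le> p" and joins: "joins_vA1 p m"
  shows "joins_vA1 q m'"
proof (cases "(q, m') = (p, m)")
  case False
  note p = admissibleD[OF adm(1)] and q = admissibleD[OF adm(2)]
  have "{vC p m, vD p m, vD q m'} \<in> Bedges ns"
    using block_vertex_avoids_value(2)[OF adm \<open>q \<le> p\<close> False] block_in_X(2)[OF adm(2)] p q \<open>q \<le> p\<close>
    by (intro block_pair_edge[OF adm(1)]) (auto simp: vD_nth)
  then show ?thesis
    using edge_classes[OF _ block_in_X[OF adm(1)] block_in_X(2)[OF adm(2)]] joins
      joins_vA1_vD_class[OF adm(1) joins] not_joins_vA1_classes[OF adm(2)]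
      vD_class_ne_vA1[OF adm(2)] vT_class_ne_vA1
    unfolding joins_vA1_def by metis
qed (use joins in simp)

lemma vC_classes_distinct:
  assumes adm: "admissible p m" "admissible q m'" and "q \<le> p" "(q, m') \<noteq> (p, m)"
    and "\<not> joins_vA1 p m"
  shows "col (vC q m') \<noteq> col (vC p m)"
proof -
  note p = admissibleD[OF adm(1)] and q = admissibleD[OF adm(2)]
  have "{vC p m, vD p m, vC q m'} \<in> Bedges ns"
    using block_vertex_avoids_value(1)[OF adm assms(3,4)] block_in_X(1)[OF adm(2)] p q assms(3)
    by (intro block_pair_edge[OF adm(1)]) (auto simp: vC_nth)
  then show ?thesis
    using edge_classes[OF _ block_in_X[OF adm(1)] block_in_X(1)[OF adm(2)]]
      not_joins_vA1_classes[OF adm(1) assms(5)] by auto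
qed

definition split_level :: nat where
  "split_level = Max ({0} \<union> {p. 1 \<le> p \<and> p < s \<and> joins_vA1 p (ns ! p)})"

lemma split_level_less: "split_level < s"
  and split_level_cases: "split_level = 0 \<or> 1 \<le> split_level \<and> joins_vA1 split_level (ns ! split_level)"
proof -
  let ?L = "{0} \<union> {p. 1 \<le> p \<and> p < s \<and> joins_vA1 p (ns ! p)}"
  have "finite ?L" by (rule finite_subset[of _ "{0..<s}"]) (use s_pos in auto)
  then have "split_level \<in> ?L" unfolding split_level_def by (intro Max_in) auto
  then show "split_level < s"
    "split_level = 0 \<or> 1 \<le> split_level \<and> joins_vA1 split_level (ns ! split_level)"
    using s_pos by auto
qed

lemma joins_vA1_iff:
  assumes adm: "admissible p m"
  shows "joins_vA1 p m \<longleftrightarrow> p \<le> split_level"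
proof
  assume "joins_vA1 p m"
  then have "joins_vA1 p (ns ! p)"
    using joins_vA1_downward[OF adm admissible_least] admissibleD[OF adm] by auto
  then show "p \<le> split_level"
    unfolding split_level_def using admissibleD[OF adm]
    by (intro Max_ge) (auto intro: finite_subset[of _ "{0..<s}"])
next
  assume "p \<le> split_level"
  then have "1 \<le> split_level" "joins_vA1 split_level (ns ! split_level)"
    using split_level_cases admissibleD[OF adm] by auto
  then show "joins_vA1 p m"
    using joins_vA1_downward[OF admissible_least adm] split_level_less \<open>p \<le> split_level\<close> by auto
qed

lemma vT_class_at_top: "split_level = s - 1 \<Longrightarrow> col vT = col (vA N)"
  using joins_vA1_vD_class[OF admissible_corner] joins_vA1_iff[OF admissible_corner]
    vD_corner_eq_vB vA_vB_same_class[of N] last_ge_2 by auto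

lemma vT_class_below_top:
  "split_level < s - 1 \<Longrightarrow> col (vC (s - 1) N) = col (vA N) \<and> col vT \<noteq> col (vA N)"
  using not_joins_vA1_classes[OF admissible_corner] joins_vA1_iff[OF admissible_corner]
    vD_corner_eq_vB vA_vB_same_class[of N] last_ge_2 by auto

text \<open>One representative for each value of coordinate \<open>split_level\<close>: \<open>vA j\<close> for the values
  \<open>j \<le> N\<close>, \<open>vC p m\<close> for the values strictly between \<open>N\<close> and \<open>ns ! split_level\<close>, and \<open>vT\<close> for
  \<open>ns ! split_level\<close> itself unless that value is \<open>N\<close>.\<close>

definition representative :: "nat list \<Rightarrow> bool" where
  "representative r \<longleftrightarrow> (\<exists>j. 1 \<le> j \<and> j \<le> N \<and> r = vA j) \<or> (split_level < s - 1 \<and> r = vT)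
     \<or> (\<exists>p m. admissible p m \<and> split_level < p \<and> N < m \<and> r = vC p m)"

lemma vA_representative: "1 \<le> j \<Longrightarrow> j \<le> N \<Longrightarrow> representative (vA j)"
  unfolding representative_def by blast

lemma vA_nth_split: "vA j ! split_level = j"
  and vB_nth_split: "vB j ! split_level = j"
  and vT_nth_split: "vT ! split_level = ns ! split_level"
  using split_level_less by (simp_all add: vA_nth vB_nth vT_nth)

lemma vC_nth_split: "admissible p m \<Longrightarrow> vC p m ! split_level = (if split_level < p then m else 1)"
  and vD_nth_split:
    "admissible p m \<Longrightarrow> vD p m ! split_level = (if split_level < p then m else ns ! split_level)"
  using split_level_less admissibleD by (simp_all add: vC_nth vD_nth)

lemma vT_representative: "\<exists>r. representative r \<and> col vT = col r \<and> r ! split_level = vT ! split_level"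
proof (cases "split_level < s - 1")
  case False
  then have "split_level = s - 1" using split_level_less by linarith
  moreover have "representative (vA N)" using vA_representative last_ge_2 by simp
  ultimately show ?thesis using vT_class_at_top vA_nth_split vT_nth_split by auto
qed (auto simp: representative_def)

lemma vC_representative:
  assumes adm: "admissible p m"
  shows "\<exists>r. representative r \<and> col (vC p m) = col r \<and> r ! split_level = vC p m ! split_level"
proof (cases "p \<le> split_level")
  case True
  then have "col (vC p m) = col (vA 1)" using joins_vA1_iff[OF adm] unfolding joins_vA1_def by simp
  moreover have "representative (vA 1)" using vA_representative last_ge_2 by simp
  ultimately show ?thesis using True vA_nth_split vC_nth_split[OF adm] by auto
next
  case False
  note p = admissibleD[OF adm]
  show ?thesis
  proof (cases "N < m")
    case True
    then have "representative (vC p m)" using False adm unfolding representative_def not_le by blast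
    then show ?thesis by blast
  next
    case False
    then have "\<not> p < s - 1" using last_less_ns[of p] p by auto
    then have "p = s - 1" "m = N" using False p by auto
    moreover have "representative (vA N)" using vA_representative last_ge_2 by simp
    ultimately show ?thesis
      using vT_class_below_top vA_nth_split vC_nth_split[OF adm] \<open>\<not> p \<le> split_level\<close> by auto
  qed
qed

lemma representative_exists:
  assumes "z \<in> Xvert ns"
  shows "\<exists>r. representative r \<and> col z = col r \<and> r ! split_level = z ! split_level"
  using assms
proof (cases rule: Xvert_cases)
  case (2 j)
  then show ?thesis using vA_representative by blast
next
  case (3 j)
  then show ?thesis using vA_vB_same_class vA_nth_split vB_nth_split vA_representative by metis
next
  case (4 p m)
  then show ?thesis using vC_representative by simp
next
  case (5 p m)
  show ?thesis
  proof (cases "p \<le> split_level")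
    case True
    then have "col (vD p m) = col vT" "vD p m ! split_level = vT ! split_level"
      using joins_vA1_vD_class[OF 5(1)] joins_vA1_iff[OF 5(1)] vD_nth_split[OF 5(1)] vT_nth_split by auto
    then show ?thesis using vT_representative 5(2) by metis
  next
    case False
    then have "col (vD p m) = col (vC p m)" "vD p m ! split_level = vC p m ! split_level"
      using not_joins_vA1_classes[OF 5(1)] joins_vA1_iff[OF 5(1)] vD_nth_split[OF 5(1)]
        vC_nth_split[OF 5(1)] by auto
    then show ?thesis using vC_representative[OF 5(1)] 5(2) by metis
  qed
qed (use vT_representative in simp)

lemma vA_vC_representatives_differ:
  assumes "1 \<le> j" "j \<le> N" "admissible p m" "split_level < p" "N < m"
  shows "col (vA j) \<noteq> col (vC p m) \<and> vA j ! split_level \<noteq> vC p m ! split_level"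
proof -
  have "col (vA j) \<noteq> col (vC p m)"
  proof (cases "j = 1")
    case True
    then show ?thesis using joins_vA1_iff[OF assms(3)] assms(4) unfolding joins_vA1_def by auto
  next
    case False
    then show ?thesis using vC_class_ne_vA[OF assms(3,5), of j] assms(1,2) by auto
  qed
  then show ?thesis using vA_nth_split vC_nth_split[OF assms(3)] assms by auto
qed

lemma vA_vT_representatives_differ:
  assumes "1 \<le> j" "j \<le> N" "split_level < s - 1"
  shows "col (vA j) \<noteq> col vT \<and> vA j ! split_level \<noteq> vT ! split_level"
proof -
  have "col (vA j) \<noteq> col vT"
    using vT_class_below_top[OF assms(3)] vT_class_ne_vA[of j] assms(1,2) by (cases "j = N") auto
  then show ?thesis using vA_nth_split vT_nth_split last_less_ns[OF assms(3)] assms(2) by auto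
qed

lemma vT_vC_representatives_differ:
  assumes "admissible p m" "split_level < p"
  shows "col vT \<noteq> col (vC p m) \<and> vT ! split_level \<noteq> vC p m ! split_level"
proof -
  note p = admissibleD[OF assms(1)]
  have "col vT \<noteq> col (vC p m)"
    using not_joins_vA1_classes[OF assms(1)] joins_vA1_iff[OF assms(1)] assms(2) by auto
  moreover have "ns ! (p - 1) \<le> ns ! split_level" using assms(2) p by (intro ns_le) auto
  ultimately show ?thesis using vT_nth_split vC_nth_split[OF assms(1)] assms(2) p by auto
qed

lemma vC_representatives_class_iff:
  assumes adm: "admissible p m" "admissible q m'" and "split_level < p" "split_level < q"
  shows "col (vC p m) = col (vC q m') \<longleftrightarrow> vC p m ! split_level = vC q m' ! split_level"
proof (cases "(q, m') = (p, m)")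
  case False
  have "m \<noteq> m'" using admissible_level_unique[OF adm(1)] adm(2) False by auto
  moreover have "col (vC p m) \<noteq> col (vC q m')"
  proof (cases "q \<le> p")
    case True
    then show ?thesis
      using vC_classes_distinct[OF adm True False] joins_vA1_iff[OF adm(1)] assms(3) by auto
  next
    case False
    then show ?thesis
      using vC_classes_distinct[OF adm(2,1)] joins_vA1_iff[OF adm(2)] assms(4)
        \<open>(q, m') \<noteq> (p, m)\<close> by auto
  qed
  ultimately show ?thesis using vC_nth_split adm assms(3,4) by auto
qed simp

lemma representative_class_iff:
  assumes "representative r" "representative r'"
  shows "col r = col r' \<longleftrightarrow> r ! split_level = r' ! split_level"
  using assms unfolding representative_def
  by (elim disjE exE conjE)
    (metis vA_classes_distinct vA_nth_split vA_vT_representatives_differ vA_vC_representatives_differ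
      vT_vC_representatives_differ vC_representatives_class_iff)+

lemma class_eq_iff_split_coordinate:
  "x \<in> Xvert ns \<Longrightarrow> y \<in> Xvert ns \<Longrightarrow> col x = col y \<longleftrightarrow> x ! split_level = y ! split_level"
  using representative_exists[of x] representative_exists[of y] representative_class_iff by metis

lemma coloring_eq_split_fibers: "P = fibers (Xvert ns) (\<lambda>x. x ! split_level)"
  using partition_eq_fibers[OF partition class_eq_iff_split_coordinate] .

end

context construction
begin

lemma strict_coloring_is_coordinate_partition:
  assumes "strict_coloring (Xvert ns) (Bedges ns) (Bedges ns) k P"
  obtains t where "t < s" "P = fibers (Xvert ns) (\<lambda>x. x ! t)" "k = ns ! t"
proof -
  interpret construction_coloring ns P k by unfold_locales (fact assms)
  have "k = card P" using assms by (simp add: strict_coloring_def)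
  also have "\<dots> = card ((\<lambda>x. x ! split_level) ` Xvert ns)"
    by (subst coloring_eq_split_fibers) (rule card_fibers)
  also have "\<dots> = ns ! split_level"
    using coordinate_values[OF split_level_less] by simp
  finally show thesis using that split_level_less coloring_eq_split_fibers by blast
qed

lemma feasible_set_eq: "feasible_set (Xvert ns) (Bedges ns) (Bedges ns) = set ns"
proof
  show "feasible_set (Xvert ns) (Bedges ns) (Bedges ns) \<subseteq> set ns"
    unfolding feasible_set_def using strict_coloring_is_coordinate_partition
    by (auto simp: in_set_conv_nth) metis
  show "set ns \<subseteq> feasible_set (Xvert ns) (Bedges ns) (Bedges ns)"
    unfolding feasible_set_def using coordinate_strict_coloring by (auto simp: in_set_conv_nth) blast
qed

lemma num_colorings_le_1: "num_colorings (Xvert ns) (Bedges ns) (Bedges ns) k \<le> 1"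
proof -
  let ?C = "{P. strict_coloring (Xvert ns) (Bedges ns) (Bedges ns) k P}"
  have "?C \<subseteq> {fibers (Xvert ns) (\<lambda>x. x ! t)}" if "t < s" "ns ! t = k" for t
  proof
    fix P assume "P \<in> ?C"
    then obtain t' where "t' < s" "P = fibers (Xvert ns) (\<lambda>x. x ! t')" "k = ns ! t'"
      using strict_coloring_is_coordinate_partition by blast
    then show "P \<in> {fibers (Xvert ns) (\<lambda>x. x ! t)}" using ns_inj[of t t'] that by simp
  qed
  then have "card ?C \<le> 1" if "t < s" "ns ! t = k" for t
    using that card_mono[of "{fibers (Xvert ns) (\<lambda>x. x ! t)}" ?C] by simp
  moreover have "card ?C = 0" if "\<not> (\<exists>t<s. ns ! t = k)"
    using that strict_coloring_is_coordinate_partition by (metis card.empty empty_Collect_eq)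
  ultimately show ?thesis unfolding num_colorings_def by (cases "\<exists>t<s. ns ! t = k") fastforce+
qed

end

theorem theorem2p4:
  fixes ns :: "nat list"
  assumes "length ns \<ge> 2"
    and "sorted_wrt (>) ns"
    and "ns ! (length ns - 1) \<ge> 2"
  shows "bi_one_realization (Xvert ns) (Bedges ns) (set ns)"
proof -
  interpret construction ns using assms by unfold_locales
  have "num_colorings (Xvert ns) (Bedges ns) (Bedges ns) k \<in> {0, 1}" for k
    using num_colorings_le_1[of k] by auto
  then show ?thesis unfolding one_realization_def using finite_Xvert feasible_set_eq by blast
qed

end
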